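(* In the setting below: (i) $(e_j)$ is a normalized monotone basis of $Z$; (ii) if $(u_j)$ is boundedly complete, then so is $(e_j)$; (iii) for every $\sum_ia_ie_i\in Z$ the series $\sum_ia_ix_i$ converges in $X$, and the map $Q:Z\to X$, $Q(\sum_ja_je_j)=\sum_ja_jx_j$, is a quotient map with $\|Q\|\le1$ such that $B_X\subseteq Q((1+\varepsilon)B_Z)$ for every $\varepsilon>0$.
   Context: Setting: $X$ is a separable Banach space, $(x_n)$ a sequence in $S_X$ such that $\{\pm x_n\}$ is dense in $S_X$; $U$ is a Banach space with a normalized $1$-unconditional basis $(u_n)$. For finite $I,J\subseteq\mathbb N$, $I<J$ means $\max I<\min J$. On $c_{00}$ with unit vectors $(e_i)$ define, for $a=\sum_ia_ie_i$, $$\|a\|_Z=\max\left\{\left\|\sum_{j=1}^k\Big\|\sum_{i\in I_j}a_ix_i\Big\|_Xu_{\min I_j}\right\|_U: k\in\mathbb N,\ I_1<\dots<I_k\text{ intervals in }\mathbb N\right\},$$ and let $Z$ be the completion of $c_{00}$ under this norm. *)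

theory Defs
  imports "HOL-Analysis.Analysis"
begin

definition schauder_basis :: "(nat \<Rightarrow> 'a::real_normed_vector) \<Rightarrow> bool" where
  "schauder_basis b \<longleftrightarrow> (\<forall>y. \<exists>!c. (\<lambda>n. c n *\<^sub>R b n) sums y)"

definition normalized :: "(nat \<Rightarrow> 'a::real_normed_vector) \<Rightarrow> bool" where
  "normalized b \<longleftrightarrow> (\<forall>n. norm (b n) = 1)"

text \<open>Monotone basis: basis constant 1, i.e. the partial sum projections have norm at most 1.\<close>
definition monotone_basis :: "(nat \<Rightarrow> 'a::real_normed_vector) \<Rightarrow> bool" where
  "monotone_basis b \<longleftrightarrow> schauder_basis b \<and>
     (\<forall>a m n. m \<le> n \<longrightarrow> norm (\<Sum>i<m. a i *\<^sub>R b i) \<le> norm (\<Sum>i<n. a i *\<^sub>R b i))"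

definition one_unconditional_basis :: "(nat \<Rightarrow> 'a::real_normed_vector) \<Rightarrow> bool" where
  "one_unconditional_basis b \<longleftrightarrow> schauder_basis b \<and>
     (\<forall>a s N. (\<forall>i. s i = 1 \<or> s i = -1) \<longrightarrow>
        norm (\<Sum>i<N. (s i * a i) *\<^sub>R b i) = norm (\<Sum>i<N. a i *\<^sub>R b i))"

definition boundedly_complete :: "(nat \<Rightarrow> 'a::real_normed_vector) \<Rightarrow> bool" where
  "boundedly_complete b \<longleftrightarrow>
     (\<forall>a. bounded (range (\<lambda>n. \<Sum>i<n. a i *\<^sub>R b i)) \<longrightarrow> summable (\<lambda>i. a i *\<^sub>R b i))"

text \<open>A list of pairs (m_j, n_j) encodes intervals I_j = {m_j..n_j} with I_1 < ... < I_k.\<close>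
definition interval_list :: "(nat \<times> nat) list \<Rightarrow> bool" where
  "interval_list Is \<longleftrightarrow> (\<forall>j<length Is. fst (Is!j) \<le> snd (Is!j)) \<and>
     (\<forall>j. Suc j < length Is \<longrightarrow> snd (Is!j) < fst (Is!Suc j))"

text \<open>The norm of Z on finitely supported scalar sequences a.\<close>
definition Znorm :: "(nat \<Rightarrow> 'x::real_normed_vector) \<Rightarrow> (nat \<Rightarrow> 'u::real_normed_vector)
    \<Rightarrow> (nat \<Rightarrow> real) \<Rightarrow> real" where
  "Znorm x u a = Sup {norm (\<Sum>j<length Is.
       norm (\<Sum>i\<in>{fst (Is!j)..snd (Is!j)}. a i *\<^sub>R x i) *\<^sub>R u (fst (Is!j))) | Is. interval_list Is}"

end

theory Submission
  imports Defs
begin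

text \<open>Testing the norm of Z on the single interval [m, n) gives
  \<open>\<parallel>\<Sum>m\<le>i<n. a_i x_i\<parallel> \<le> \<parallel>\<Sum>m\<le>i<n. a_i e_i\<parallel>\<close>, and shrinking interval families shows that the
  partial sums of (e_i) grow monotonically; together with the density of its span this makes
  (e_i) a monotone basis, and e_i \<mapsto> x_i extends to a contraction Q : Z \<rightarrow> X.
  Since the \<plusminus>x_n are dense in the sphere, every y is within \<eta>\<parallel>y\<parallel> of Q z for some z with
  \<parallel>z\<parallel> = \<parallel>y\<parallel>, and iterating such approximate lifts yields exact lifts of norm at most
  \<parallel>y\<parallel> / (1 - \<eta>).
  If (u_j) is boundedly complete and \<Sum> a_i e_i had bounded but non-Cauchy partial sums, one could
  choose successive blocks of intervals, each contributing at least r/4 to the norm of Z; their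
  vectors in U have disjoint supports and bounded partial sums, so they would have to tend to 0.\<close>

section \<open>Monotone bases from dense spans\<close>

lemma sum_lessThan_finite_support:
  fixes a :: "nat \<Rightarrow> real" and e :: "nat \<Rightarrow> 'a::real_vector"
  shows "\<forall>i\<ge>N. a i = 0 \<Longrightarrow> N \<le> K \<Longrightarrow> (\<Sum>i<K. a i *\<^sub>R e i) = (\<Sum>i<N. a i *\<^sub>R e i)"
  by (rule sum.mono_neutral_right) auto

lemma span_range_finite_expansion:
  fixes e :: "nat \<Rightarrow> 'a::real_vector"
  assumes "w \<in> span (range e)"
  shows "\<exists>a N. (\<forall>i\<ge>N. a i = 0) \<and> w = (\<Sum>i<N. a i *\<^sub>R e i)"
proof -
  let ?E = "{w. \<exists>a N. (\<forall>i\<ge>N. a i = 0) \<and> w = (\<Sum>i<N. a i *\<^sub>R e i)}"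
  have "span (range e) \<subseteq> ?E"
  proof (rule span_minimal)
    show "range e \<subseteq> ?E"
    proof
      fix w assume "w \<in> range e"
      then obtain n where "w = e n" by auto
      moreover have "(\<Sum>i<Suc n. (if i = n then 1 else 0) *\<^sub>R e i) = e n"
        by (simp add: if_distrib cong: if_cong)
      ultimately show "w \<in> ?E"
        by (intro CollectI exI[of _ "\<lambda>i. if i = n then 1 else 0"] exI[of _ "Suc n"]) auto
    qed
    show "subspace ?E" unfolding subspace_def
    proof (intro conjI ballI allI)
      show "0 \<in> ?E" by (intro CollectI exI[of _ "\<lambda>i. 0"] exI[of _ 0]) auto
    next
      fix v w assume "v \<in> ?E" "w \<in> ?E"
      then obtain a N b M where ab: "\<forall>i\<ge>N. a i = 0" "v = (\<Sum>i<N. a i *\<^sub>R e i)"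
        "\<forall>i\<ge>M. b i = 0" "w = (\<Sum>i<M. b i *\<^sub>R e i)" by auto
      have "v + w = (\<Sum>i<max N M. (a i + b i) *\<^sub>R e i)"
        using sum_lessThan_finite_support[OF ab(1), of "max N M" e]
          sum_lessThan_finite_support[OF ab(3), of "max N M" e] ab
        by (simp add: scaleR_add_left sum.distrib)
      then show "v + w \<in> ?E"
        using ab by (intro CollectI exI[of _ "\<lambda>i. a i + b i"] exI[of _ "max N M"]) auto
    next
      fix c :: real and v assume "v \<in> ?E"
      then obtain a N where a: "\<forall>i\<ge>N. a i = 0" "v = (\<Sum>i<N. a i *\<^sub>R e i)" by auto
      then have "c *\<^sub>R v = (\<Sum>i<N. (c * a i) *\<^sub>R e i)" by (simp add: scaleR_sum_right)
      then show "c *\<^sub>R v \<in> ?E"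
        using a by (intro CollectI exI[of _ "\<lambda>i. c * a i"] exI[of _ N]) auto
    qed
  qed
  with assms show ?thesis by blast
qed

locale monotone_normalized_sequence =
  fixes e :: "nat \<Rightarrow> 'z::banach"
  assumes norm_e: "norm (e n) = 1"
    and partial_sums_mono: "m \<le> n \<Longrightarrow> norm (\<Sum>i<m. a i *\<^sub>R e i) \<le> norm (\<Sum>i<n. a i *\<^sub>R e i)"
begin

lemma norm_partial_sum_le:
  "\<forall>i\<ge>N. a i = 0 \<Longrightarrow> norm (\<Sum>i<n. a i *\<^sub>R e i) \<le> norm (\<Sum>i<N. a i *\<^sub>R e i)"
  using partial_sums_mono[of n "max n N" a] sum_lessThan_finite_support[of N a "max n N" e] by simp

lemma abs_coeff_le:
  assumes "\<forall>i\<ge>N. a i = 0"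
  shows "\<bar>a n\<bar> \<le> 2 * norm (\<Sum>i<N. a i *\<^sub>R e i)"
proof -
  have "\<bar>a n\<bar> = norm ((\<Sum>i<Suc n. a i *\<^sub>R e i) - (\<Sum>i<n. a i *\<^sub>R e i))"
    by (simp add: norm_e)
  also have "\<dots> \<le> norm (\<Sum>i<Suc n. a i *\<^sub>R e i) + norm (\<Sum>i<n. a i *\<^sub>R e i)"
    by (rule norm_triangle_ineq4)
  also have "\<dots> \<le> 2 * norm (\<Sum>i<N. a i *\<^sub>R e i)"
    using norm_partial_sum_le[OF assms, of n] norm_partial_sum_le[OF assms, of "Suc n"] by linarith
  finally show ?thesis .
qed

lemma finite_expansions_diff_le:
  assumes a: "\<forall>i\<ge>N. a i = 0" and b: "\<forall>i\<ge>M. b i = 0"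
  shows "norm ((\<Sum>i<n. a i *\<^sub>R e i) - (\<Sum>i<n. b i *\<^sub>R e i)) \<le> norm ((\<Sum>i<N. a i *\<^sub>R e i) - (\<Sum>i<M. b i *\<^sub>R e i))"
    and "\<bar>a n - b n\<bar> \<le> 2 * norm ((\<Sum>i<N. a i *\<^sub>R e i) - (\<Sum>i<M. b i *\<^sub>R e i))"
proof -
  have diff: "(\<Sum>i<N. a i *\<^sub>R e i) - (\<Sum>i<M. b i *\<^sub>R e i) = (\<Sum>i<max N M. (a i - b i) *\<^sub>R e i)"
    using sum_lessThan_finite_support[OF a, of "max N M" e] sum_lessThan_finite_support[OF b, of "max N M" e]
    by (simp add: scaleR_diff_left sum_subtractf)
  have supp: "\<forall>i\<ge>max N M. a i - b i = 0"
    using a b by simp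
  show "norm ((\<Sum>i<n. a i *\<^sub>R e i) - (\<Sum>i<n. b i *\<^sub>R e i)) \<le> norm ((\<Sum>i<N. a i *\<^sub>R e i) - (\<Sum>i<M. b i *\<^sub>R e i))"
    using norm_partial_sum_le[OF supp, of n] by (simp add: diff scaleR_diff_left sum_subtractf)
  show "\<bar>a n - b n\<bar> \<le> 2 * norm ((\<Sum>i<N. a i *\<^sub>R e i) - (\<Sum>i<M. b i *\<^sub>R e i))"
    using abs_coeff_le[OF supp, of n] by (simp add: diff)
qed

lemma expansion_unique:
  assumes "(\<lambda>n. c n *\<^sub>R e n) sums y" "(\<lambda>n. d n *\<^sub>R e n) sums y"
  shows "c = d"
proof
  fix k
  have zero: "(\<lambda>n. (c n - d n) *\<^sub>R e n) sums 0"
    using sums_diff[OF assms] by (simp add: scaleR_diff_left)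
  have partial_zero: "(\<Sum>i<n. (c i - d i) *\<^sub>R e i) = 0" for n
  proof -
    have "norm (\<Sum>i<n. (c i - d i) *\<^sub>R e i) \<le> 0"
    proof (rule tendsto_le[OF trivial_limit_sequentially])
      show "(\<lambda>N. norm (\<Sum>i<N. (c i - d i) *\<^sub>R e i)) \<longlonglongrightarrow> 0"
        using tendsto_norm[OF zero[unfolded sums_def]] by simp
      show "\<forall>\<^sub>F N in sequentially. norm (\<Sum>i<n. (c i - d i) *\<^sub>R e i) \<le> norm (\<Sum>i<N. (c i - d i) *\<^sub>R e i)"
        using eventually_ge_at_top[of n] by eventually_elim (rule partial_sums_mono)
    qed simp
    then show ?thesis by simp
  qed
  have "(c k - d k) *\<^sub>R e k = 0"
    using partial_zero[of "Suc k"] partial_zero[of k] by simp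
  then show "c k = d k" using norm_e[of k] by auto
qed

text \<open>The coefficients of finite approximants w_k of y converge by the coefficient bound of
  finite_expansions_diff_le, and by its partial sum bound the partial sums of the limit expansion
  stay within \<open>\<parallel>w_k - y\<parallel>\<close> of those of w_k.\<close>
lemma expansion_exists:
  assumes "y \<in> closure (span (range e))"
  shows "\<exists>c. (\<lambda>n. c n *\<^sub>R e n) sums y"
proof -
  obtain w where w_span: "\<And>k. w k \<in> span (range e)" and w_lim: "w \<longlonglongrightarrow> y"
    using assms unfolding closure_sequential by blast
  obtain A N where A: "\<And>k. \<forall>i\<ge>N k. A k i = 0" "\<And>k. w k = (\<Sum>i<N k. A k i *\<^sub>R e i)"
    using span_range_finite_expansion[OF w_span] by metis
  note partial_diff = finite_expansions_diff_le(1)[OF A(1) A(1), folded A(2)]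
  have "Cauchy (\<lambda>k. A k i)" for i
  proof (rule CauchyI)
    fix r :: real assume "0 < r"
    then obtain M where M: "\<forall>k\<ge>M. \<forall>l\<ge>M. norm (w k - w l) < r / 2"
      using CauchyD[OF LIMSEQ_imp_Cauchy[OF w_lim], of "r / 2"] by auto
    show "\<exists>M. \<forall>k\<ge>M. \<forall>l\<ge>M. norm (A k i - A l i) < r"
    proof (intro exI allI impI)
      fix k l assume "M \<le> k" "M \<le> l"
      moreover have "\<bar>A k i - A l i\<bar> \<le> 2 * norm (w k - w l)"
        using finite_expansions_diff_le(2)[OF A(1) A(1)] by (simp add: A(2))
      ultimately show "norm (A k i - A l i) < r" using M by fastforce
    qed
  qed
  then obtain c where c: "\<And>i. (\<lambda>k. A k i) \<longlonglongrightarrow> c i"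
    unfolding Cauchy_convergent_iff convergent_def by metis
  have partial_close: "norm ((\<Sum>i<n. A k i *\<^sub>R e i) - (\<Sum>i<n. c i *\<^sub>R e i)) \<le> norm (w k - y)" for k n
  proof (rule tendsto_le[OF trivial_limit_sequentially])
    show "(\<lambda>l. norm (w k - w l)) \<longlonglongrightarrow> norm (w k - y)"
      by (intro tendsto_intros w_lim)
    show "(\<lambda>l. norm ((\<Sum>i<n. A k i *\<^sub>R e i) - (\<Sum>i<n. A l i *\<^sub>R e i)))
        \<longlonglongrightarrow> norm ((\<Sum>i<n. A k i *\<^sub>R e i) - (\<Sum>i<n. c i *\<^sub>R e i))"
      by (intro tendsto_intros c)
  qed (use partial_diff in simp)
  have "(\<lambda>n. \<Sum>i<n. c i *\<^sub>R e i) \<longlonglongrightarrow> y"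
    unfolding LIMSEQ_iff
  proof (intro allI impI)
    fix r :: real assume "0 < r"
    then obtain k where k: "norm (w k - y) < r / 2"
      using w_lim unfolding LIMSEQ_iff by (metis half_gt_zero order_refl)
    have "norm ((\<Sum>i<n. c i *\<^sub>R e i) - y) < r" if "N k \<le> n" for n
    proof -
      have "(\<Sum>i<n. A k i *\<^sub>R e i) = w k"
        using sum_lessThan_finite_support[OF A(1) that] A(2) by simp
      then have "norm ((\<Sum>i<n. c i *\<^sub>R e i) - w k) \<le> norm (w k - y)"
        using partial_close[of k n] by (simp add: norm_minus_commute)
      then show ?thesis
        using norm_triangle_ineq[of "(\<Sum>i<n. c i *\<^sub>R e i) - w k" "w k - y"] k by simp
    qed
    then show "\<exists>n0. \<forall>n\<ge>n0. norm ((\<Sum>i<n. c i *\<^sub>R e i) - y) < r" by blast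
  qed
  then show ?thesis unfolding sums_def by blast
qed

lemma monotone_basis_if_dense:
  assumes "closure (span (range e)) = UNIV"
  shows "monotone_basis e"
proof -
  have "\<exists>!c. (\<lambda>n. c n *\<^sub>R e n) sums y" for y
  proof -
    obtain c where "(\<lambda>n. c n *\<^sub>R e n) sums y"
      using expansion_exists assms by blast
    then show ?thesis using expansion_unique by (intro ex1I[of _ c]) auto
  qed
  then show ?thesis
    unfolding monotone_basis_def schauder_basis_def using partial_sums_mono by blast
qed

end

section \<open>Maps dominated by a basis and quotient maps\<close>

lemma unit_coeff_sums:
  fixes f :: "nat \<Rightarrow> 'a::real_normed_vector"
  shows "(\<lambda>i. (if i = n then 1 else 0) *\<^sub>R f i) sums f n"
proof -
  have "(\<lambda>i. (if i = n then 1 else 0) *\<^sub>R f i) = (\<lambda>i. if i = n then f i else 0)"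
    by auto
  then show ?thesis using sums_single[of n f] by simp
qed

definition basis_coeff :: "(nat \<Rightarrow> 'z::real_normed_vector) \<Rightarrow> 'z \<Rightarrow> nat \<Rightarrow> real" where
  "basis_coeff e z = (THE c. (\<lambda>n. c n *\<^sub>R e n) sums z)"

lemma basis_coeff_sums: "schauder_basis e \<Longrightarrow> (\<lambda>n. basis_coeff e z n *\<^sub>R e n) sums z"
  using theI'[of "\<lambda>c. (\<lambda>n. c n *\<^sub>R e n) sums z"]
  unfolding basis_coeff_def schauder_basis_def by blast

lemma basis_coeff_eq: "schauder_basis e \<Longrightarrow> (\<lambda>n. c n *\<^sub>R e n) sums z \<Longrightarrow> basis_coeff e z = c"
  using basis_coeff_sums unfolding schauder_basis_def by metis

lemma basis_coeff_add:
  "schauder_basis e \<Longrightarrow> basis_coeff e (z + w) = (\<lambda>i. basis_coeff e z i + basis_coeff e w i)"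
  by (rule basis_coeff_eq)
    (use sums_add[OF basis_coeff_sums basis_coeff_sums] in \<open>simp_all add: scaleR_add_left\<close>)

lemma basis_coeff_scaleR:
  "schauder_basis e \<Longrightarrow> basis_coeff e (r *\<^sub>R z) = (\<lambda>i. r * basis_coeff e z i)"
  by (rule basis_coeff_eq) (use sums_scaleR_right[OF basis_coeff_sums] in simp_all)

lemma summable_if_dominated:
  fixes e :: "nat \<Rightarrow> 'z::banach" and x :: "nat \<Rightarrow> 'x::banach"
  assumes dom: "\<And>m n. norm (\<Sum>i\<in>{m..<n}. c i *\<^sub>R x i) \<le> norm (\<Sum>i\<in>{m..<n}. c i *\<^sub>R e i)"
    and "(\<lambda>i. c i *\<^sub>R e i) sums z"
  shows "summable (\<lambda>i. c i *\<^sub>R x i)"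
  using summable_Cauchy[of "\<lambda>i. c i *\<^sub>R e i"] sums_summable[OF assms(2)] dom
  unfolding summable_Cauchy by (meson le_less_trans)

lemma dominated_basis_transfer:
  fixes e :: "nat \<Rightarrow> 'z::banach" and x :: "nat \<Rightarrow> 'x::banach"
  assumes e: "schauder_basis e"
    and dom: "\<And>c m n. norm (\<Sum>i\<in>{m..<n}. c i *\<^sub>R x i) \<le> norm (\<Sum>i\<in>{m..<n}. c i *\<^sub>R e i)"
  obtains Q where "bounded_linear Q" "\<And>z c. (\<lambda>i. c i *\<^sub>R e i) sums z \<Longrightarrow> (\<lambda>i. c i *\<^sub>R x i) sums Q z"
    "\<And>z. norm (Q z) \<le> norm z" "\<And>n. Q (e n) = x n"
proof
  define Q where "Q z = (\<Sum>i. basis_coeff e z i *\<^sub>R x i)" for z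
  show Q_sums: "(\<lambda>i. c i *\<^sub>R x i) sums Q z" if "(\<lambda>i. c i *\<^sub>R e i) sums z" for z c
    using that summable_if_dominated[OF dom that] basis_coeff_eq[OF e that]
    by (simp add: Q_def summable_sums)
  note coeff_sums = basis_coeff_sums[OF e]
  show norm_Q: "norm (Q z) \<le> norm z" for z
  proof (rule tendsto_le[OF trivial_limit_sequentially])
    show "(\<lambda>n. norm (\<Sum>i<n. basis_coeff e z i *\<^sub>R e i)) \<longlonglongrightarrow> norm z"
      using tendsto_norm[OF coeff_sums[of z, unfolded sums_def]] .
    show "(\<lambda>n. norm (\<Sum>i<n. basis_coeff e z i *\<^sub>R x i)) \<longlonglongrightarrow> norm (Q z)"
      using tendsto_norm[OF Q_sums[OF coeff_sums, unfolded sums_def]] .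
  qed (use dom[where m=0] in \<open>simp add: atLeast0LessThan\<close>)
  have summable: "summable (\<lambda>i. basis_coeff e z i *\<^sub>R x i)" for z
    using summable_if_dominated[OF dom coeff_sums] .
  have "Q (z + w) = Q z + Q w" for z w
    using suminf_add[OF summable summable] by (simp add: Q_def basis_coeff_add[OF e] scaleR_add_left)
  moreover have "Q (r *\<^sub>R z) = r *\<^sub>R Q z" for r z
    using suminf_scaleR_right[OF summable] by (simp add: Q_def basis_coeff_scaleR[OF e])
  ultimately show "bounded_linear Q"
    using norm_Q by (intro bounded_linear_intro[of _ 1]) auto
  show "Q (e n) = x n" for n
    using Q_sums[OF unit_coeff_sums] unit_coeff_sums by (rule sums_unique2)
qed

text \<open>Iterating approximate lifts with geometrically shrinking residuals, as in the proof of the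
  open mapping theorem.\<close>
lemma exact_lift_from_approximate_lifts:
  fixes T :: "'z::banach \<Rightarrow> 'x::real_normed_vector"
  assumes T: "bounded_linear T" and \<eta>: "0 < \<eta>" "\<eta> < 1"
    and approx: "\<And>y. \<exists>z. norm z \<le> norm y \<and> norm (y - T z) \<le> \<eta> * norm y"
  shows "\<exists>z. T z = y \<and> norm z \<le> norm y / (1 - \<eta>)"
proof -
  obtain L where L: "\<And>y. norm (L y) \<le> norm y" "\<And>y. norm (y - T (L y)) \<le> \<eta> * norm y"
    using approx by metis
  define R where "R k = ((\<lambda>r. r - T (L r)) ^^ k) y" for k
  have R_Suc: "R (Suc k) = R k - T (L (R k))" for k
    by (simp add: R_def)
  have norm_R: "norm (R k) \<le> \<eta> ^ k * norm y" for k
  proof (induction k)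
    case (Suc k)
    have "norm (R (Suc k)) \<le> \<eta> * norm (R k)" using L(2) by (simp add: R_Suc)
    also have "\<dots> \<le> \<eta> * (\<eta> ^ k * norm y)" using Suc \<eta> by (intro mult_left_mono) auto
    finally show ?case by simp
  qed (simp add: R_def)
  have geom: "(\<lambda>k. \<eta> ^ k * norm y) sums (norm y / (1 - \<eta>))"
    using sums_mult2[OF geometric_sums[of \<eta>], of "norm y"] \<eta> by simp
  have norm_L: "norm (L (R k)) \<le> \<eta> ^ k * norm y" for k
    using L(1) norm_R order_trans by blast
  then have summable_norm_L: "summable (\<lambda>k. norm (L (R k)))"
    by (intro summable_comparison_test'[OF sums_summable[OF geom], of 0]) auto
  define z where "z = (\<Sum>k. L (R k))"
  have "norm z \<le> (\<Sum>k. norm (L (R k)))"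
    unfolding z_def by (rule summable_norm[OF summable_norm_L])
  also have "\<dots> \<le> norm y / (1 - \<eta>)"
    using suminf_le[OF norm_L summable_norm_L sums_summable[OF geom]] sums_unique[OF geom] by simp
  finally have "norm z \<le> norm y / (1 - \<eta>)" .
  moreover have "T z = y"
  proof -
    have "(\<lambda>k. T (L (R k))) sums T z"
      unfolding z_def by (rule bounded_linear.sums[OF T summable_sums[OF summable_norm_cancel[OF summable_norm_L]]])
    moreover have "R \<longlonglongrightarrow> 0"
    proof (rule Lim_null_comparison)
      show "\<forall>\<^sub>F k in sequentially. norm (R k) \<le> \<eta> ^ k * norm y" using norm_R by simp
      show "(\<lambda>k. \<eta> ^ k * norm y) \<longlonglongrightarrow> 0"
        by (intro tendsto_mult_left_zero LIMSEQ_power_zero) (use \<eta> in auto)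
    qed
    then have "(\<lambda>k. R k - R (Suc k)) sums y"
      using telescope_sums'[of R 0] by (simp add: R_def)
    ultimately show ?thesis by (simp add: R_Suc sums_unique2)
  qed
  ultimately show ?thesis by blast
qed

lemma quotient_map_from_approximate_lifts:
  fixes T :: "'z::banach \<Rightarrow> 'x::real_normed_vector"
  assumes T: "bounded_linear T" and contraction: "\<And>z. norm (T z) \<le> norm z"
    and approx: "\<And>\<eta> y. 0 < \<eta> \<Longrightarrow> \<exists>z. norm z \<le> norm y \<and> norm (y - T z) \<le> \<eta> * norm y"
  shows "surj T" "T ` ball 0 1 = ball 0 1" "\<forall>\<epsilon>>0. cball 0 1 \<subseteq> T ` cball 0 (1 + \<epsilon>)"
proof -
  have lift: "\<exists>z. T z = y \<and> norm z \<le> norm y / (1 - \<eta>)" if "0 < \<eta>" "\<eta> < 1" for \<eta> y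
    using exact_lift_from_approximate_lifts[OF T that] approx[OF that(1)] by blast
  have "\<exists>z. T z = y" for y
    using lift[of "1/2" y] by auto
  then show "surj T" unfolding surj_def by metis
  show "T ` ball 0 1 = ball 0 1"
  proof
    show "T ` ball 0 1 \<subseteq> ball 0 1"
      using contraction by (force intro: order.strict_trans1)
    show "ball 0 1 \<subseteq> T ` ball 0 1"
    proof
      fix y :: 'x assume "y \<in> ball 0 1"
      then have y: "norm y < 1" by simp
      define \<eta> where "\<eta> = (1 - norm y) / 2"
      have \<eta>: "0 < \<eta>" "\<eta> < 1" "norm y < 1 - \<eta>"
        using y norm_ge_zero[of y] unfolding \<eta>_def by (auto simp: field_simps simp del: norm_ge_zero)
      then obtain z where "T z = y" "norm z \<le> norm y / (1 - \<eta>)"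
        using lift by blast
      moreover have "norm y / (1 - \<eta>) < 1"
        using \<eta> by (simp add: divide_less_eq)
      ultimately show "y \<in> T ` ball 0 1" by force
    qed
  qed
  show "\<forall>\<epsilon>>0. cball 0 1 \<subseteq> T ` cball 0 (1 + \<epsilon>)"
  proof (intro allI impI subsetI)
    fix \<epsilon> :: real and y :: 'x assume \<epsilon>: "0 < \<epsilon>" and "y \<in> cball 0 1"
    then have y: "norm y \<le> 1" by simp
    have \<eta>: "0 < \<epsilon> / (1 + \<epsilon>)" "\<epsilon> / (1 + \<epsilon>) < 1"
      using \<epsilon> by auto
    then obtain z where "T z = y" "norm z \<le> norm y / (1 - \<epsilon> / (1 + \<epsilon>))"
      using lift by blast
    moreover have "norm y / (1 - \<epsilon> / (1 + \<epsilon>)) = norm y * (1 + \<epsilon>)"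
      using \<epsilon> by (simp add: field_simps)
    moreover have "norm y * (1 + \<epsilon>) \<le> 1 + \<epsilon>"
      using y \<epsilon> by (simp add: mult_left_le_one_le)
    ultimately show "y \<in> T ` cball 0 (1 + \<epsilon>)" by force
  qed
qed

lemma sphere_dense_approx:
  fixes x :: "nat \<Rightarrow> 'x::real_normed_vector"
  assumes dense: "sphere 0 1 \<subseteq> closure (range x \<union> range (\<lambda>n. - x n))" and "0 < \<eta>"
  shows "\<exists>n s. (s = 1 \<or> s = -1) \<and> norm (y - (norm y * s) *\<^sub>R x n) \<le> \<eta> * norm y"
proof (cases "y = 0")
  case False
  define v where "v = (1 / norm y) *\<^sub>R y"
  have "v \<in> sphere 0 1" using False by (simp add: v_def)
  then have "v \<in> closure (range x \<union> range (\<lambda>n. - x n))" using dense by blast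
  then obtain p where p: "p \<in> range x \<union> range (\<lambda>n. - x n)" "dist p v < \<eta>"
    using \<open>0 < \<eta>\<close> unfolding closure_approachable by blast
  have "\<exists>n s. (s = 1 \<or> s = -1) \<and> p = s *\<^sub>R x n"
  proof (cases "p \<in> range x")
    case True
    then show ?thesis by (metis imageE scaleR_one)
  next
    case False
    then have "p \<in> range (\<lambda>n. - x n)" using p(1) by blast
    then show ?thesis by (metis imageE scaleR_minus1_left)
  qed
  then obtain n s where ns: "s = 1 \<or> s = -1" "p = s *\<^sub>R x n" by blast
  have "y - (norm y * s) *\<^sub>R x n = norm y *\<^sub>R (v - p)"
    using False ns by (simp add: v_def algebra_simps)
  then have "norm (y - (norm y * s) *\<^sub>R x n) = norm y * dist p v"
    by (simp add: dist_norm norm_minus_commute)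
  also have "\<dots> \<le> \<eta> * norm y"
    using p(2) mult_left_mono[of "dist p v" \<eta> "norm y"] by (simp add: mult.commute)
  finally show ?thesis using ns by blast
qed auto

lemma approximate_lifts_if_sphere_dense:
  fixes T :: "'z::real_normed_vector \<Rightarrow> 'x::real_normed_vector"
    and e :: "nat \<Rightarrow> 'z" and x :: "nat \<Rightarrow> 'x"
  assumes T: "linear T" and norm_e: "\<And>n. norm (e n) = 1" and T_e: "\<And>n. T (e n) = x n"
    and dense: "sphere 0 1 \<subseteq> closure (range x \<union> range (\<lambda>n. - x n))" and "0 < \<eta>"
  shows "\<exists>z. norm z \<le> norm y \<and> norm (y - T z) \<le> \<eta> * norm y"
proof -
  obtain n s where s: "s = 1 \<or> s = -1" and close: "norm (y - (norm y * s) *\<^sub>R x n) \<le> \<eta> * norm y"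
    using sphere_dense_approx[OF dense \<open>0 < \<eta>\<close>] by blast
  have "T ((norm y * s) *\<^sub>R e n) = (norm y * s) *\<^sub>R x n"
    using T_e linear_scale[OF T] by simp
  moreover have "norm ((norm y * s) *\<^sub>R e n) = norm y"
    using s norm_e by auto
  ultimately show ?thesis
    using close by (intro exI[of _ "(norm y * s) *\<^sub>R e n"]) simp
qed

section \<open>Block sequences in a boundedly complete space\<close>

lemma one_unconditional_partial_sums_mono:
  assumes u: "one_unconditional_basis u" and "m \<le> n"
  shows "norm (\<Sum>i<m. d i *\<^sub>R u i) \<le> norm (\<Sum>i<n. d i *\<^sub>R u i)"
proof -
  define s where "s i = (if i < m then 1 else (-1::real))" for i
  have flip: "norm (\<Sum>i<n. (s i * d i) *\<^sub>R u i) = norm (\<Sum>i<n. d i *\<^sub>R u i)"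
    using u unfolding one_unconditional_basis_def s_def by auto
  have "(\<Sum>i<n. d i *\<^sub>R u i) + (\<Sum>i<n. (s i * d i) *\<^sub>R u i) = (\<Sum>i<n. (if i < m then 2 * d i else 0) *\<^sub>R u i)"
    by (simp add: sum.distrib[symmetric] scaleR_add_left[symmetric] s_def) (rule sum.cong, auto)
  also have "\<dots> = (\<Sum>i<m. (2 * d i) *\<^sub>R u i)"
    using \<open>m \<le> n\<close> by (intro sum.mono_neutral_cong_right) auto
  also have "\<dots> = 2 *\<^sub>R (\<Sum>i<m. d i *\<^sub>R u i)"
    by (simp add: scaleR_sum_right)
  finally have "2 * norm (\<Sum>i<m. d i *\<^sub>R u i) \<le> norm (\<Sum>i<n. d i *\<^sub>R u i) + norm (\<Sum>i<n. (s i * d i) *\<^sub>R u i)"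
    by (metis norm_scaleR norm_triangle_ineq real_norm_def abs_numeral)
  then show ?thesis using flip by simp
qed

lemma boundedly_complete_blocks_tendsto_0:
  fixes u :: "nat \<Rightarrow> 'u::real_normed_vector" and D :: "nat \<Rightarrow> nat \<Rightarrow> real"
  assumes bc: "boundedly_complete u"
    and mono: "\<And>d m n. m \<le> n \<Longrightarrow> norm (\<Sum>i<m. d i *\<^sub>R u i) \<le> norm (\<Sum>i<n. d i *\<^sub>R u i)"
    and B: "strict_mono B" "B 0 = 0"
    and bounded: "\<And>K. norm (\<Sum>k<K. \<Sum>i\<in>{B k..<B (Suc k)}. D k i *\<^sub>R u i) \<le> C"
  shows "(\<lambda>k. \<Sum>i\<in>{B k..<B (Suc k)}. D k i *\<^sub>R u i) \<longlonglongrightarrow> 0"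
proof -
  define d where "d i = D (LEAST k. i < B (Suc k)) i" for i
  have d_block: "d i = D k i" if "B k \<le> i" "i < B (Suc k)" for k i
  proof -
    have "(LEAST k. i < B (Suc k)) = k"
    proof (rule Least_equality)
      show "k \<le> l" if "i < B (Suc l)" for l
        using that \<open>B k \<le> i\<close> strict_mono_less_eq[OF B(1), of "Suc l" k] by linarith
    qed (fact that(2))
    then show ?thesis by (simp add: d_def)
  qed
  define S where "S n = (\<Sum>i<n. d i *\<^sub>R u i)" for n
  have S_B: "S (B K) = (\<Sum>k<K. \<Sum>i\<in>{B k..<B (Suc k)}. D k i *\<^sub>R u i)" for K
  proof (induction K)
    case (Suc K)
    have "S (B (Suc K)) = S (B K) + (\<Sum>i\<in>{B K..<B (Suc K)}. d i *\<^sub>R u i)"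
      unfolding S_def atLeast0LessThan[symmetric]
      by (rule sum.atLeastLessThan_concat[symmetric]) (use strict_monoD[OF B(1), of K "Suc K"] in auto)
    also have "(\<Sum>i\<in>{B K..<B (Suc K)}. d i *\<^sub>R u i) = (\<Sum>i\<in>{B K..<B (Suc K)}. D K i *\<^sub>R u i)"
      by (rule sum.cong) (auto simp: d_block)
    finally show ?case using Suc by simp
  qed (simp add: S_def B(2))
  have "norm (S n) \<le> C" for n
    using mono[OF seq_suble[OF B(1)], of d n] S_B[of n] bounded[of n] by (simp add: S_def)
  then have "summable (\<lambda>i. d i *\<^sub>R u i)"
    using bc unfolding boundedly_complete_def bounded_iff S_def by blast
  then have "S \<longlonglongrightarrow> (\<Sum>i. d i *\<^sub>R u i)"
    unfolding S_def by (rule summable_LIMSEQ)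
  then have "(\<lambda>k. S (B (Suc k)) - S (B k)) \<longlonglongrightarrow> (\<Sum>i. d i *\<^sub>R u i) - (\<Sum>i. d i *\<^sub>R u i)"
    using LIMSEQ_subseq_LIMSEQ[OF _ B(1)] by (intro tendsto_diff) (auto simp: comp_def intro: LIMSEQ_Suc)
  then show ?thesis by (simp add: S_B)
qed

lemma sum_list_scaleR_regroup:
  fixes c :: "'a \<Rightarrow> real" and w :: "nat \<Rightarrow> 'u::real_vector"
  assumes "finite S" "\<forall>p\<in>set L. g p \<in> S"
  shows "(\<Sum>p\<leftarrow>L. c p *\<^sub>R w (g p)) = (\<Sum>i\<in>S. (\<Sum>p\<leftarrow>L. if g p = i then c p else 0) *\<^sub>R w i)"
  using assms(2)
proof (induction L)
  case (Cons p L)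
  have "(\<Sum>i\<in>S. (if g p = i then c p else 0) *\<^sub>R w i) = c p *\<^sub>R w (g p)"
    using Cons.prems assms(1) by (simp add: if_distrib[of "\<lambda>t. t *\<^sub>R _"] sum.delta cong: if_cong)
  with Cons show ?case by (simp add: scaleR_add_left sum.distrib)
qed simp

section \<open>Interval lists and the norm of Z\<close>

definition Zterm :: "(nat \<Rightarrow> 'x::real_normed_vector) \<Rightarrow> (nat \<Rightarrow> 'u::real_normed_vector)
    \<Rightarrow> (nat \<Rightarrow> real) \<Rightarrow> nat \<times> nat \<Rightarrow> 'u" where
  "Zterm x u a p = norm (\<Sum>i\<in>{fst p..snd p}. a i *\<^sub>R x i) *\<^sub>R u (fst p)"

definition Zvec :: "(nat \<Rightarrow> 'x::real_normed_vector) \<Rightarrow> (nat \<Rightarrow> 'u::real_normed_vector)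
    \<Rightarrow> (nat \<Rightarrow> real) \<Rightarrow> (nat \<times> nat) list \<Rightarrow> 'u" where
  "Zvec x u a Is = (\<Sum>p\<leftarrow>Is. Zterm x u a p)"

lemma Znorm_eq_Sup: "Znorm x u a = Sup {norm (Zvec x u a Is) | Is. interval_list Is}"
  unfolding Znorm_def Zvec_def Zterm_def by (simp add: sum_list_sum_nth atLeast0LessThan)

lemma Zvec_Nil [simp]: "Zvec x u a [] = 0"
  and Zvec_Cons [simp]: "Zvec x u a (p # Is) = Zterm x u a p + Zvec x u a Is"
  and Zvec_append [simp]: "Zvec x u a (Is @ Js) = Zvec x u a Is + Zvec x u a Js"
  by (simp_all add: Zvec_def)

lemma Zterm_cong: "(\<And>i. fst p \<le> i \<Longrightarrow> i \<le> snd p \<Longrightarrow> a i = b i) \<Longrightarrow> Zterm x u a p = Zterm x u b p"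
  unfolding Zterm_def by (metis (no_types, lifting) atLeastAtMost_iff sum.cong)

lemma Zterm_eq_0: "(\<And>i. fst p \<le> i \<Longrightarrow> i \<le> snd p \<Longrightarrow> a i = 0) \<Longrightarrow> Zterm x u a p = 0"
  unfolding Zterm_def by (simp add: sum.neutral)

lemma Zvec_cong:
  "(\<And>p i. p \<in> set Is \<Longrightarrow> fst p \<le> i \<Longrightarrow> i \<le> snd p \<Longrightarrow> a i = b i) \<Longrightarrow> Zvec x u a Is = Zvec x u b Is"
  unfolding Zvec_def by (intro arg_cong[where f=sum_list] map_cong refl Zterm_cong) auto

lemma Zvec_filter:
  "(\<And>p i. p \<in> set Is \<Longrightarrow> \<not> P p \<Longrightarrow> fst p \<le> i \<Longrightarrow> i \<le> snd p \<Longrightarrow> a i = 0)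
    \<Longrightarrow> Zvec x u a (filter P Is) = Zvec x u a Is"
  unfolding Zvec_def by (rule sum_list_map_filter) (auto intro: Zterm_eq_0)

lemma Zvec_eq_0:
  "(\<And>p i. p \<in> set Is \<Longrightarrow> fst p \<le> i \<Longrightarrow> i \<le> snd p \<Longrightarrow> a i = 0) \<Longrightarrow> Zvec x u a Is = 0"
  using Zvec_filter[of Is "\<lambda>_. False" a] by simp

lemma interval_list_iff:
  "interval_list Is \<longleftrightarrow> (\<forall>p\<in>set Is. fst p \<le> snd p) \<and> sorted_wrt (\<lambda>p q. snd p < fst q) Is"
proof
  assume Is: "interval_list Is"
  have chain: "snd (Is!j) < fst (Is!k)" if "j < k" "k < length Is" for j k
    using that
  proof (induction k)
    case (Suc k)
    have "fst (Is!k) \<le> snd (Is!k)" "snd (Is!k) < fst (Is!Suc k)"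
      using Is Suc.prems unfolding interval_list_def by auto
    with Suc show ?case by (cases "j = k") auto
  qed simp
  have "\<forall>p\<in>set Is. fst p \<le> snd p"
    using Is unfolding interval_list_def by (metis in_set_conv_nth)
  moreover have "sorted_wrt (\<lambda>p q. snd p < fst q) Is"
    unfolding sorted_wrt_iff_nth_less using chain by blast
  ultimately show "(\<forall>p\<in>set Is. fst p \<le> snd p) \<and> sorted_wrt (\<lambda>p q. snd p < fst q) Is" ..
qed (auto simp: interval_list_def sorted_wrt_iff_nth_less)

lemma interval_list_Nil [simp]: "interval_list []"
  by (simp add: interval_list_iff)

lemma interval_list_single [simp]: "interval_list [p] \<longleftrightarrow> fst p \<le> snd p"
  by (simp add: interval_list_iff)

lemma interval_list_Cons:
  "interval_list (p # Is) \<longleftrightarrow> fst p \<le> snd p \<and> (\<forall>q\<in>set Is. snd p < fst q) \<and> interval_list Is"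
  by (auto simp: interval_list_iff)

lemma interval_list_append:
  "interval_list (Is @ Js) \<longleftrightarrow>
     interval_list Is \<and> interval_list Js \<and> (\<forall>p\<in>set Is. \<forall>q\<in>set Js. snd p < fst q)"
  by (auto simp: interval_list_iff sorted_wrt_append)

lemma interval_list_filter: "interval_list Is \<Longrightarrow> interval_list (filter P Is)"
  by (auto simp: interval_list_iff intro: sorted_wrt_filter)

lemma interval_list_nth_fst_ge: "interval_list Is \<Longrightarrow> j < length Is \<Longrightarrow> j \<le> fst (Is!j)"
proof (induction j)
  case (Suc j)
  then have "fst (Is!j) \<le> snd (Is!j)" "snd (Is!j) < fst (Is!Suc j)"
    by (auto simp: interval_list_def)
  with Suc show ?case by simp
qed simp

lemma Znorm_le:
  assumes "\<And>Is. interval_list Is \<Longrightarrow> norm (Zvec x u a Is) \<le> B"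
  shows "Znorm x u a \<le> B"
  unfolding Znorm_eq_Sup by (rule cSup_least) (use assms in \<open>auto intro: exI[of _ "[]"]\<close>)

lemma interval_list_clip_right:
  assumes a: "\<forall>i\<ge>n. a i = 0" and Is: "interval_list Is"
  obtains Js where "interval_list Js" "\<forall>p\<in>set Js. snd p < n" "Zvec x u a Js = Zvec x u a Is"
proof
  define clip where "clip p = (fst p, min (snd p) (n - 1))" for p :: "nat \<times> nat"
  let ?Is' = "filter (\<lambda>p. fst p < n) Is"
  have "sorted_wrt (\<lambda>p q. snd p < fst q) ?Is'"
    using Is by (auto simp: interval_list_iff intro: sorted_wrt_filter)
  then have "sorted_wrt (\<lambda>p q. snd (clip p) < fst (clip q)) ?Is'"
    by (rule sorted_wrt_mono_rel[rotated]) (auto simp: clip_def)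
  then show "interval_list (map clip ?Is')"
    using Is by (auto simp: interval_list_iff sorted_wrt_map clip_def)
  show "\<forall>p\<in>set (map clip ?Is'). snd p < n"
    by (auto simp: clip_def)
  have "Zvec x u a (map clip ?Is') = Zvec x u a ?Is'"
    unfolding Zvec_def map_map comp_def
  proof (intro arg_cong[where f=sum_list] map_cong refl)
    fix p assume "p \<in> set ?Is'"
    then have "(\<Sum>i\<in>{fst p..min (snd p) (n - 1)}. a i *\<^sub>R x i) = (\<Sum>i\<in>{fst p..snd p}. a i *\<^sub>R x i)"
      by (intro sum.mono_neutral_left) (use a in auto)
    then show "Zterm x u a (clip p) = Zterm x u a p"
      by (simp add: Zterm_def clip_def)
  qed
  also have "\<dots> = Zvec x u a Is"
    by (rule Zvec_filter) (use a in auto)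
  finally show "Zvec x u a (map clip ?Is') = Zvec x u a Is" .
qed

lemma interval_list_concat_blocks:
  assumes B: "strict_mono B"
    and J: "\<And>k. interval_list (J k)" "\<And>k. \<forall>p\<in>set (J k). B k \<le> fst p \<and> snd p < B (Suc k)"
  shows "interval_list (concat (map J [0..<K])) \<and> (\<forall>p\<in>set (concat (map J [0..<K])). snd p < B K)"
proof (induction K)
  case (Suc K)
  have "snd p < fst q" if "p \<in> set (concat (map J [0..<K]))" "q \<in> set (J K)" for p q
    using Suc that J(2)[of K] by fastforce
  moreover have "B K < B (Suc K)"
    using strict_monoD[OF B] by simp
  ultimately show ?case
    using Suc J(1)[of K] J(2)[of K] by (fastforce simp: interval_list_append)
qed simp

locale Z_norm =
  fixes x :: "nat \<Rightarrow> 'x::real_normed_vector" and u :: "nat \<Rightarrow> 'u::real_normed_vector"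
  assumes norm_x: "norm (x n) = 1" and norm_u: "norm (u n) = 1"
begin

lemma norm_Zterm_le: "norm (Zterm x u a p) \<le> (\<Sum>i\<in>{fst p..snd p}. \<bar>a i\<bar>)"
proof -
  have "norm (Zterm x u a p) = norm (\<Sum>i\<in>{fst p..snd p}. a i *\<^sub>R x i)"
    by (simp add: Zterm_def norm_u)
  also have "\<dots> \<le> (\<Sum>i\<in>{fst p..snd p}. \<bar>a i\<bar>)"
    using norm_sum[of "\<lambda>i. a i *\<^sub>R x i"] by (simp add: norm_x)
  finally show ?thesis .
qed

text \<open>Only the first N intervals can meet the support of a, since the j-th interval starts at or after j.\<close>
lemma norm_Zvec_le:
  assumes a: "\<forall>i\<ge>N. a i = 0" and Is: "interval_list Is"
  shows "norm (Zvec x u a Is) \<le> real N * (\<Sum>i<N. \<bar>a i\<bar>)"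
proof -
  define S where "S = (\<Sum>i<N. \<bar>a i\<bar>)"
  have term_le: "norm (Zterm x u a (Is!j)) \<le> (if j < N then S else 0)" if j: "j < length Is" for j
  proof -
    let ?p = "Is!j"
    have "norm (Zterm x u a ?p) \<le> (\<Sum>i\<in>{fst ?p..snd ?p}. \<bar>a i\<bar>)"
      by (rule norm_Zterm_le)
    also have "\<dots> = (\<Sum>i\<in>{fst ?p..snd ?p} \<inter> {..<N}. \<bar>a i\<bar>)"
      by (rule sum.mono_neutral_right) (use a in \<open>auto simp: not_less[symmetric]\<close>)
    also have "\<dots> \<le> (if j < N then S else 0)"
    proof (cases "j < N")
      case True
      then show ?thesis unfolding S_def by (simp add: sum_mono2)
    next
      case False
      then have "{fst ?p..snd ?p} \<inter> {..<N} = {}"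
        using interval_list_nth_fst_ge[OF Is j] by auto
      then show ?thesis using False by simp
    qed
    finally show ?thesis .
  qed
  have "norm (Zvec x u a Is) \<le> (\<Sum>j<length Is. norm (Zterm x u a (Is!j)))"
    by (simp add: Zvec_def sum_list_sum_nth atLeast0LessThan norm_sum)
  also have "\<dots> \<le> (\<Sum>j<length Is. if j < N then S else 0)"
    by (rule sum_mono) (use term_le in auto)
  also have "\<dots> = (\<Sum>j\<in>{..<length Is} \<inter> {..<N}. S)"
    by (simp add: sum.If_cases lessThan_def)
  also have "\<dots> \<le> (\<Sum>j<N. S)"
    by (rule sum_mono2) (auto simp: S_def sum_nonneg)
  finally show ?thesis by (simp add: S_def)
qed

lemma bdd_above_norm_Zvec:
  "\<forall>i\<ge>N. a i = 0 \<Longrightarrow> bdd_above {norm (Zvec x u a Is) | Is. interval_list Is}"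
  using norm_Zvec_le by (auto intro!: bdd_aboveI)

lemma norm_Zvec_le_Znorm:
  "\<forall>i\<ge>N. a i = 0 \<Longrightarrow> interval_list Is \<Longrightarrow> norm (Zvec x u a Is) \<le> Znorm x u a"
  unfolding Znorm_eq_Sup by (rule cSup_upper) (auto simp: bdd_above_norm_Zvec)

lemma less_Znorm_imp:
  assumes "\<forall>i\<ge>N. a i = 0" "t < Znorm x u a"
  shows "\<exists>Is. interval_list Is \<and> t < norm (Zvec x u a Is)"
proof -
  have "{norm (Zvec x u a Is) | Is. interval_list Is} \<noteq> {}"
    by (auto intro: exI[of _ "[]"])
  with assms show ?thesis
    using less_cSup_iff[OF _ bdd_above_norm_Zvec] unfolding Znorm_eq_Sup by force
qed

lemma norm_Zvec_unit_le:
  assumes "interval_list Is"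
  shows "norm (Zvec x u (\<lambda>i. if i = k then 1 else 0) Is) \<le> 1"
  using assms
proof (induction Is)
  case (Cons p Is)
  let ?d = "\<lambda>i. if i = k then 1 else (0::real)"
  show ?case
  proof (cases "fst p \<le> k \<and> k \<le> snd p")
    case True
    then have "Zvec x u ?d Is = 0"
      using Cons.prems by (intro Zvec_eq_0) (fastforce simp: interval_list_Cons)
    moreover have "(\<Sum>i\<in>{fst p..snd p}. ?d i *\<^sub>R x i) = (\<Sum>i\<in>{fst p..snd p}. if i = k then x i else 0)"
      by (rule sum.cong) auto
    moreover have "\<dots> = x k"
      using True by (simp add: sum.delta)
    ultimately show ?thesis by (simp add: Zterm_def norm_x norm_u)
  next
    case False
    then have "Zterm x u ?d p = 0" by (intro Zterm_eq_0) auto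
    with Cons show ?thesis by (simp add: interval_list_Cons)
  qed
qed simp

text \<open>Cutting an interval at m would move its index in u, so instead the first interval
  meeting [m, n) is split off; whichever of it and the rest has the larger norm carries half.\<close>
lemma interval_list_inside_block:
  assumes b: "\<forall>i. i < m \<or> n \<le> i \<longrightarrow> b i = 0" and Is: "interval_list Is"
  obtains Js where "interval_list Js" "\<forall>p\<in>set Js. m \<le> fst p \<and> snd p < n"
    "norm (Zvec x u b Is) \<le> 2 * norm (Zvec x u b Js)"
proof -
  obtain Is1 where Is1: "interval_list Is1" "\<forall>p\<in>set Is1. snd p < n" "Zvec x u b Is1 = Zvec x u b Is"
    using interval_list_clip_right[of n b Is] b Is by auto
  define Is2 where "Is2 = filter (\<lambda>p. m \<le> snd p) Is1"
  have "Zvec x u b Is2 = Zvec x u b Is1"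
    unfolding Is2_def by (rule Zvec_filter) (use b in auto)
  then have Is2: "interval_list Is2" "Zvec x u b Is2 = Zvec x u b Is" "\<forall>p\<in>set Is2. m \<le> snd p \<and> snd p < n"
    using Is1 unfolding Is2_def by (auto intro: interval_list_filter)
  show ?thesis
  proof (cases Is2)
    case Nil
    then show ?thesis using Is2 that[of "[]"] by simp
  next
    case (Cons p0 rest)
    have p0: "fst p0 \<le> snd p0" "m \<le> snd p0" "snd p0 < n" and rest: "interval_list rest"
      and rest_inside: "\<forall>p\<in>set rest. m \<le> fst p \<and> snd p < n"
      using Is2 Cons by (fastforce simp: interval_list_Cons)+
    define p1 where "p1 = (max m (fst p0), snd p0)"
    have "(\<Sum>i\<in>{fst p1..snd p1}. b i *\<^sub>R x i) = (\<Sum>i\<in>{fst p0..snd p0}. b i *\<^sub>R x i)"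
      unfolding p1_def by (rule sum.mono_neutral_left) (use b in auto)
    then have "norm (Zterm x u b p0) = norm (Zvec x u b [p1])"
      by (simp add: Zterm_def norm_u)
    then have "norm (Zvec x u b Is) \<le> norm (Zvec x u b [p1]) + norm (Zvec x u b rest)"
      using Is2(2) Cons norm_triangle_ineq[of "Zterm x u b p0" "Zvec x u b rest"] by simp
    moreover have "interval_list [p1]" "\<forall>p\<in>set [p1]. m \<le> fst p \<and> snd p < n"
      using p0 by (auto simp: p1_def)
    ultimately show ?thesis
      using that[of "[p1]"] that[of rest] rest rest_inside
      by (cases "norm (Zvec x u b rest) \<le> norm (Zvec x u b [p1])") simp_all
  qed
qed

end

section \<open>The unit vector basis of Z\<close>

locale Z_basis = Z_norm x u
  for x :: "nat \<Rightarrow> 'x::real_normed_vector" and u :: "nat \<Rightarrow> 'u::real_normed_vector" +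
  fixes e :: "nat \<Rightarrow> 'z::banach"
  assumes norm_sum_e: "\<forall>i\<ge>N. a i = 0 \<Longrightarrow> norm (\<Sum>i<N. a i *\<^sub>R e i) = Znorm x u a"
begin

lemma norm_sum_e_truncate: "norm (\<Sum>i<n. a i *\<^sub>R e i) = Znorm x u (\<lambda>i. if i < n then a i else 0)"
  using norm_sum_e[of n "\<lambda>i. if i < n then a i else 0"] by simp

lemma norm_Zvec_le_norm_sum_e:
  assumes "interval_list Is" "\<forall>p\<in>set Is. snd p < n"
  shows "norm (Zvec x u a Is) \<le> norm (\<Sum>i<n. a i *\<^sub>R e i)"
proof -
  have "Zvec x u a Is = Zvec x u (\<lambda>i. if i < n then a i else 0) Is"
    by (rule Zvec_cong) (use assms(2) in fastforce)
  also have "norm \<dots> \<le> Znorm x u (\<lambda>i. if i < n then a i else 0)"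
    by (rule norm_Zvec_le_Znorm[OF _ assms(1), of n]) simp
  finally show ?thesis by (simp add: norm_sum_e_truncate)
qed

lemma norm_sum_e_le:
  assumes "\<And>Is. interval_list Is \<Longrightarrow> \<forall>p\<in>set Is. snd p < n \<Longrightarrow> norm (Zvec x u a Is) \<le> B"
  shows "norm (\<Sum>i<n. a i *\<^sub>R e i) \<le> B"
  unfolding norm_sum_e_truncate
proof (rule Znorm_le)
  fix Is assume "interval_list Is"
  then obtain Js where Js: "interval_list Js" "\<forall>p\<in>set Js. snd p < n"
    "Zvec x u (\<lambda>i. if i < n then a i else 0) Js = Zvec x u (\<lambda>i. if i < n then a i else 0) Is"
    using interval_list_clip_right[of n "\<lambda>i. if i < n then a i else 0" Is] by auto
  have "Zvec x u (\<lambda>i. if i < n then a i else 0) Js = Zvec x u a Js"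
    by (rule Zvec_cong) (use Js(2) in fastforce)
  then show "norm (Zvec x u (\<lambda>i. if i < n then a i else 0) Is) \<le> B"
    using Js assms by metis
qed

lemma partial_sums_mono: "m \<le> n \<Longrightarrow> norm (\<Sum>i<m. a i *\<^sub>R e i) \<le> norm (\<Sum>i<n. a i *\<^sub>R e i)"
  by (rule norm_sum_e_le) (auto intro!: norm_Zvec_le_norm_sum_e)

lemma norm_e: "norm (e k) = 1"
proof -
  let ?d = "\<lambda>i. if i = k then 1 else (0::real)"
  have e_k: "(\<Sum>i<Suc k. ?d i *\<^sub>R e i) = e k"
    by (simp add: if_distrib cong: if_cong)
  have "norm (Zvec x u ?d [(k, k)]) = 1"
    by (simp add: Zterm_def norm_x norm_u)
  then have "1 \<le> norm (e k)"
    using norm_Zvec_le_norm_sum_e[of "[(k, k)]" "Suc k" ?d] e_k by simp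
  moreover have "norm (e k) \<le> 1"
    using norm_sum_e_le[of "Suc k" ?d 1] norm_Zvec_unit_le e_k by simp
  ultimately show ?thesis by simp
qed

lemma norm_sum_x_le_sum_e:
  "norm (\<Sum>i\<in>{m..<n}. c i *\<^sub>R x i) \<le> norm (\<Sum>i\<in>{m..<n}. c i *\<^sub>R e i)"
proof (cases "m < n")
  case True
  define b where "b i = (if m \<le> i then c i else 0)" for i
  have "(\<Sum>i\<in>{m..<n}. c i *\<^sub>R x i) = (\<Sum>i\<in>{m..n - 1}. b i *\<^sub>R x i)"
    using True by (intro sum.cong) (auto simp: b_def)
  then have "norm (\<Sum>i\<in>{m..<n}. c i *\<^sub>R x i) = norm (Zvec x u b [(m, n - 1)])"
    by (simp add: Zterm_def norm_u)
  also have "\<dots> \<le> norm (\<Sum>i<n. b i *\<^sub>R e i)"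
    by (rule norm_Zvec_le_norm_sum_e) (use True in auto)
  also have "(\<Sum>i<n. b i *\<^sub>R e i) = (\<Sum>i\<in>{m..<n}. c i *\<^sub>R e i)"
    by (rule sum.mono_neutral_cong_right) (auto simp: b_def)
  finally show ?thesis .
qed simp

lemma interval_list_in_block:
  assumes "0 < t" "t \<le> norm (\<Sum>i\<in>{m..<n}. a i *\<^sub>R e i)"
  shows "\<exists>Js. m < n \<and> interval_list Js \<and> (\<forall>p\<in>set Js. m \<le> fst p \<and> snd p < n)
    \<and> t / 4 < norm (Zvec x u a Js)"
proof -
  have "m < n"
    using assms by (cases "m < n") auto
  define b where "b i = (if m \<le> i \<and> i < n then a i else 0)" for i
  have "(\<Sum>i\<in>{m..<n}. a i *\<^sub>R e i) = (\<Sum>i<n. b i *\<^sub>R e i)"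
    by (rule sum.mono_neutral_cong_left) (auto simp: b_def)
  with assms have "t / 2 < Znorm x u b"
    using norm_sum_e[of n b] by (simp add: b_def)
  then obtain Is where Is: "interval_list Is" "t / 2 < norm (Zvec x u b Is)"
    using less_Znorm_imp[of n b "t / 2"] by (auto simp: b_def)
  obtain Js where Js: "interval_list Js" "\<forall>p\<in>set Js. m \<le> fst p \<and> snd p < n"
    "norm (Zvec x u b Is) \<le> 2 * norm (Zvec x u b Js)"
    using interval_list_inside_block[of m n b Is] Is(1) by (auto simp: b_def)
  have "Zvec x u b Js = Zvec x u a Js"
    by (rule Zvec_cong) (use Js(2) in \<open>fastforce simp: b_def\<close>)
  with Is Js \<open>m < n\<close> show ?thesis by (intro exI[of _ Js]) auto
qed

text \<open>The vectors of U given by interval lists J k inside successive blocks [B k, B (k+1)) have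
  disjoint supports, and their partial sums are bounded by the partial sums of \<open>\<Sum>a_i e_i\<close>.\<close>
lemma Zvec_blocks_tendsto_0:
  assumes u_unc: "one_unconditional_basis u" and u_bc: "boundedly_complete u"
    and C: "\<And>n. norm (\<Sum>i<n. a i *\<^sub>R e i) \<le> C"
    and B: "strict_mono B" "B 0 = 0"
    and J: "\<And>k. interval_list (J k)" "\<And>k. \<forall>p\<in>set (J k). B k \<le> fst p \<and> snd p < B (Suc k)"
  shows "(\<lambda>k. Zvec x u a (J k)) \<longlonglongrightarrow> 0"
proof -
  define D where "D k i = (\<Sum>p\<leftarrow>J k. if fst p = i then norm (\<Sum>j\<in>{fst p..snd p}. a j *\<^sub>R x j) else 0)"
    for k i
  have J_in_u: "Zvec x u a (J k) = (\<Sum>i\<in>{B k..<B (Suc k)}. D k i *\<^sub>R u i)" for k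
    unfolding Zvec_def Zterm_def D_def
    by (rule sum_list_scaleR_regroup) (use J(1)[of k] J(2)[of k] in \<open>fastforce simp: interval_list_iff\<close>)+
  have "norm (\<Sum>k<K. Zvec x u a (J k)) \<le> C" for K
  proof -
    have "(\<Sum>k<K. Zvec x u a (J k)) = Zvec x u a (concat (map J [0..<K]))"
      by (induction K) simp_all
    also have "norm \<dots> \<le> norm (\<Sum>i<B K. a i *\<^sub>R e i)"
      using interval_list_concat_blocks[OF B(1) J] by (intro norm_Zvec_le_norm_sum_e) auto
    finally show ?thesis using C order_trans by blast
  qed
  then show ?thesis
    unfolding J_in_u
    by (intro boundedly_complete_blocks_tendsto_0[OF u_bc one_unconditional_partial_sums_mono[OF u_unc] B])
qed

lemma boundedly_complete_if_boundedly_complete_u: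
  assumes u_unc: "one_unconditional_basis u" and u_bc: "boundedly_complete u"
  shows "boundedly_complete e"
  unfolding boundedly_complete_def
proof (intro allI impI)
  fix a assume "bounded (range (\<lambda>n. \<Sum>i<n. a i *\<^sub>R e i))"
  then obtain C where C: "\<And>n. norm (\<Sum>i<n. a i *\<^sub>R e i) \<le> C"
    unfolding bounded_iff by auto
  show "summable (\<lambda>i. a i *\<^sub>R e i)" unfolding summable_Cauchy
  proof (rule ccontr)
    assume "\<not> (\<forall>r>0. \<exists>N. \<forall>m\<ge>N. \<forall>n. norm (\<Sum>i\<in>{m..<n}. a i *\<^sub>R e i) < r)"
    then obtain r where r: "r > 0" "\<And>N. \<exists>m\<ge>N. \<exists>n. r \<le> norm (\<Sum>i\<in>{m..<n}. a i *\<^sub>R e i)"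
      by (auto simp: not_less)
    have "\<exists>n J. M < n \<and> interval_list J \<and> (\<forall>p\<in>set J. M \<le> fst p \<and> snd p < n)
        \<and> r / 4 < norm (Zvec x u a J)" for M
    proof -
      obtain m n where "M \<le> m" "r \<le> norm (\<Sum>i\<in>{m..<n}. a i *\<^sub>R e i)"
        using r(2) by blast
      moreover from this(2) obtain J where "m < n" "interval_list J"
        "\<forall>p\<in>set J. m \<le> fst p \<and> snd p < n" "r / 4 < norm (Zvec x u a J)"
        using interval_list_in_block[OF r(1)] by blast
      ultimately show ?thesis
        by (intro exI[of _ n] exI[of _ J]) auto
    qed
    then obtain NX JX where NX: "\<And>M. M < NX M" and JX: "\<And>M. interval_list (JX M)"
      "\<And>M. \<forall>p\<in>set (JX M). M \<le> fst p \<and> snd p < NX M" "\<And>M. r / 4 < norm (Zvec x u a (JX M))"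
      by metis
    define B where "B k = (NX ^^ k) 0" for k
    have B: "strict_mono B" "B 0 = 0"
      using NX by (simp_all add: B_def strict_mono_Suc_iff)
    have "(\<lambda>k. Zvec x u a (JX (B k))) \<longlonglongrightarrow> 0"
      using JX by (intro Zvec_blocks_tendsto_0[OF u_unc u_bc C B]) (simp_all add: B_def)
    then obtain k where "norm (Zvec x u a (JX (B k))) < r / 4"
      using r(1) LIMSEQ_D[of _ 0 "r / 4"] by fastforce
    then show False
      using JX(3)[of "B k"] by simp
  qed
qed

end

theorem propositionA2:
  fixes x :: "nat \<Rightarrow> 'x::banach"
    and u :: "nat \<Rightarrow> 'u::banach"
    and e :: "nat \<Rightarrow> 'z::banach"
  assumes x_sphere: "\<forall>n. norm (x n) = 1"
    and x_dense: "sphere 0 1 \<subseteq> closure (range x \<union> range (\<lambda>n. - x n))"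
    and u_norm: "normalized u"
    and u_unc: "one_unconditional_basis u"
    and e_norm: "\<forall>a N. (\<forall>i\<ge>N. a i = 0) \<longrightarrow> norm (\<Sum>i<N. a i *\<^sub>R e i) = Znorm x u a"
    and e_dense: "closure (span (range e)) = UNIV"
  shows "normalized e \<and> monotone_basis e
    \<and> (boundedly_complete u \<longrightarrow> boundedly_complete e)
    \<and> (\<forall>z c. (\<lambda>i. c i *\<^sub>R e i) sums z \<longrightarrow> summable (\<lambda>i. c i *\<^sub>R x i))
    \<and> (\<exists>Q. bounded_linear Q
         \<and> (\<forall>z c. (\<lambda>i. c i *\<^sub>R e i) sums z \<longrightarrow> (\<lambda>i. c i *\<^sub>R x i) sums Q z)
         \<and> surj Q \<and> Q ` ball 0 1 = ball 0 1
         \<and> onorm Q \<le> 1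
         \<and> (\<forall>\<epsilon>>0. cball 0 1 \<subseteq> Q ` cball 0 (1 + \<epsilon>)))"
proof -
  interpret Z_basis x u e
    using x_sphere u_norm e_norm by unfold_locales (auto simp: normalized_def)
  have "monotone_normalized_sequence e"
    by unfold_locales (fact norm_e, fact partial_sums_mono)
  then have basis: "monotone_basis e"
    using e_dense by (rule monotone_normalized_sequence.monotone_basis_if_dense)
  obtain Q where Q: "bounded_linear Q" "\<And>z c. (\<lambda>i. c i *\<^sub>R e i) sums z \<Longrightarrow> (\<lambda>i. c i *\<^sub>R x i) sums Q z"
    "\<And>z. norm (Q z) \<le> norm z" "\<And>n. Q (e n) = x n"
    using dominated_basis_transfer[OF _ norm_sum_x_le_sum_e] basis
    unfolding monotone_basis_def by blast
  have "\<exists>z. norm z \<le> norm y \<and> norm (y - Q z) \<le> \<eta> * norm y" if "0 < \<eta>" for \<eta> y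
    using approximate_lifts_if_sphere_dense[OF bounded_linear.linear[OF Q(1)] norm_e Q(4) x_dense that] .
  note quotient = quotient_map_from_approximate_lifts[OF Q(1) Q(3) this]
  show ?thesis
    using basis norm_e boundedly_complete_if_boundedly_complete_u[OF u_unc] Q quotient
      summable_if_dominated[OF norm_sum_x_le_sum_e] onorm_bound[of 1 Q]
    by (auto simp: normalized_def)
qed

end
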